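(* Let $d,n\in\mathbb{N}$ be such that $h_c=h_c(d,n)$ is finite. For every $\epsilon\in(0,1]$ there exists $\gamma>0$ depending only on $\epsilon,d,n$ such that the following holds. Let $B$ be an axis-parallel box in $\mathbb{R}^d$ and $S$ a set of $m\ge h_c$ points in $\mathbb{R}^d$ such that at least $\epsilon m$ points of $S$ cannot be covered by any $n$ translated copies of $B$. Let $0<\delta\le 1$. If one independently samples $\frac{1}{\gamma}\ln\frac{1}{\delta}$ sets, each a uniformly random $h_c$-element subset of $S$, then with probability at least $1-\delta$ some sampled set cannot be covered by any $n$ translated copies of $B$.
   Context: An axis-parallel box in $\mathbb{R}^d$ is a set $[\alpha_1,\beta_1]\times\dots\times[\alpha_d,\beta_d]$. "At least $\epsilon m$ points of $S$ cannot be covered by any $n$ translated copies of $B$" means that for any $n$ translates of $B$ at least $\epsilon m$ points of $S$ lie outside their union. A family is $n$-pierceable if some set of at most $n$ points meets every member. Given families $\mathcal{F}_1,\dots,\mathcal{F}_m$, a colorful $t$-tuple is $(C_1,\dots,C_t)$ with $C_j\in\mathcal{F}_{i_j}$ for pairwise distinct $i_j$. $h_c(d,n)$ denotes the smallest positive integer $h$ such that whenever $\mathcal{F}_1,\dots,\mathcal{F}_h$ are collections of axis-parallel boxes in $\mathbb{R}^d$ with every colorful $h$-tuple $n$-pierceable, some $\mathcal{F}_i$ is $n$-pierceable. *)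

theory Defs
  imports "HOL-Analysis.Analysis" "HOL-Probability.Probability"
begin

definition is_box :: "(real ^ 'd) set \<Rightarrow> bool" where
  "is_box B \<longleftrightarrow> (\<exists>a b. (\<forall>i. a $ i \<le> b $ i) \<and> B = cbox a b)"

definition pierceable :: "nat \<Rightarrow> 'a set set \<Rightarrow> bool" where
  "pierceable n F \<longleftrightarrow> (\<exists>P. finite P \<and> card P \<le> n \<and> (\<forall>C\<in>F. P \<inter> C \<noteq> {}))"

definition hc_prop :: "'d::finite itself \<Rightarrow> nat \<Rightarrow> nat \<Rightarrow> bool" where
  "hc_prop _ n h \<longleftrightarrow>
     (\<forall>F :: nat \<Rightarrow> (real ^ 'd) set set.
        (\<forall>i<h. \<forall>C\<in>F i. is_box C) \<longrightarrow>
        (\<forall>f. (\<forall>i<h. f i \<in> F i) \<longrightarrow> pierceable n (f ` {..<h})) \<longrightarrow>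
        (\<exists>i<h. pierceable n (F i)))"

definition hc_finite :: "'d::finite itself \<Rightarrow> nat \<Rightarrow> bool" where
  "hc_finite d n \<longleftrightarrow> (\<exists>h>0. hc_prop d n h)"

definition hc :: "'d::finite itself \<Rightarrow> nat \<Rightarrow> nat" where
  "hc d n = (LEAST h. h > 0 \<and> hc_prop d n h)"

definition coverable :: "nat \<Rightarrow> (real ^ 'd) set \<Rightarrow> (real ^ 'd) set \<Rightarrow> bool" where
  "coverable n B X \<longleftrightarrow>
     (\<exists>T. finite T \<and> card T \<le> n \<and> X \<subseteq> (\<Union>t\<in>T. (\<lambda>x. t + x) ` B))"

definition subset_pmf :: "nat \<Rightarrow> 'a set \<Rightarrow> 'a set pmf" where
  "subset_pmf h S = pmf_of_set {A. A \<subseteq> S \<and> card A = h}"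

end

theory Submission
  imports Defs
begin

text \<open>A translate \<open>t + B\<close> contains \<open>x\<close> iff \<open>t \<in> x - B\<close>, so covering \<open>X\<close> by \<open>n\<close> translates of \<open>B\<close>
  is the same as piercing the boxes \<open>x - B\<close>, \<open>x \<in> X\<close>, with \<open>n\<close> points. The colorful Helly
  number \<open>h = h\<^sub>c(d,n)\<close> therefore says: from any \<open>h\<close> uncoverable sets one can pick one point
  each such that the \<open>h\<close> picked points are still uncoverable. If at least \<open>\<epsilon>m\<close> points of \<open>S\<close>
  survive every choice of \<open>n\<close> translates, greedily removing uncoverable subsets of size \<open>\<le> h\<close>
  yields \<open>r \<ge> \<epsilon>m/h\<close> pairwise disjoint ones; for every \<open>h\<close> of them a colorful choice gives
  an uncoverable \<open>h\<close>-set meeting exactly these, so at least \<open>C(r,h) \<ge> (\<epsilon>m/h\<^sup>2)\<^sup>h\<close> of the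
  \<open>C(m,h) \<le> m\<^sup>h\<close> \<open>h\<close>-subsets of \<open>S\<close> are uncoverable. Thus a single sample is uncoverable with
  probability at least some \<open>\<gamma>(\<epsilon>,h) > 0\<close>, and \<open>k \<ge> ln(1/\<delta>)/\<gamma>\<close> independent samples all fail
  with probability at most \<open>(1 - \<gamma>)\<^sup>k \<le> \<delta>\<close>.\<close>

definition covering_translations :: "'a::ab_group_add set \<Rightarrow> 'a \<Rightarrow> 'a set" where
  "covering_translations B x = {t. x \<in> (\<lambda>y. t + y) ` B}"

lemma covering_translations_eq: "covering_translations B x = (\<lambda>b. x - b) ` B"
proof -
  have "x \<in> (\<lambda>y. t + y) ` B \<longleftrightarrow> t \<in> (\<lambda>b. x - b) ` B" for t
    by (auto simp: image_iff algebra_simps)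
  then show ?thesis
    unfolding covering_translations_def by (simp add: set_eq_iff)
qed

lemma coverable_iff_pierceable:
  "coverable n B X \<longleftrightarrow> pierceable n (covering_translations B ` X)"
proof -
  have "X \<subseteq> (\<Union>t\<in>T. (\<lambda>y. t + y) ` B) \<longleftrightarrow> (\<forall>C \<in> covering_translations B ` X. T \<inter> C \<noteq> {})"
    for T
    unfolding covering_translations_def by (auto; blast)
  then show ?thesis
    unfolding coverable_def pierceable_def by simp
qed

lemma is_box_covering_translations:
  assumes "is_box B"
  shows "is_box (covering_translations B x)"
proof -
  obtain a b where ab: "\<forall>i. a $ i \<le> b $ i" and B: "B = cbox a b"
    using assms unfolding is_box_def by blast
  have "a \<in> cbox a b"
    using ab by (simp add: mem_box_cart)
  then have "cbox a b \<noteq> {}"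
    by blast
  have "covering_translations B x = (\<lambda>y. (-1) *\<^sub>R y + x) ` cbox a b"
    unfolding covering_translations_eq B by simp
  also have "\<dots> = cbox (x - b) (x - a)"
    using \<open>cbox a b \<noteq> {}\<close> by (subst image_affinity_cbox) (simp add: algebra_simps)
  finally show ?thesis
    using ab
    unfolding is_box_def by (metis diff_left_mono vector_minus_component)
qed

lemma coverable_subset: "coverable n B Y \<Longrightarrow> X \<subseteq> Y \<Longrightarrow> coverable n B X"
  unfolding coverable_def by blast

definition colorful_helly :: "nat \<Rightarrow> ('a set \<Rightarrow> bool) \<Rightarrow> bool" where
  "colorful_helly h P \<longleftrightarrow>
     (\<forall>E. (\<forall>i<h. \<not> P (E i)) \<longrightarrow> (\<exists>x. (\<forall>i<h. x i \<in> E i) \<and> \<not> P (x ` {..<h})))"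

lemma hc_prop_imp_colorful_helly:
  fixes B :: "(real ^ 'd::finite) set"
  assumes "hc_prop TYPE('d) n h" and "is_box B"
  shows "colorful_helly h (coverable n B)"
  unfolding colorful_helly_def
proof (intro allI impI)
  fix E assume "\<forall>i<h. \<not> coverable n B (E i)"
  define F where "F i = covering_translations B ` E i" for i
  have "\<not> (\<exists>i<h. pierceable n (F i))"
    using \<open>\<forall>i<h. \<not> coverable n B (E i)\<close> by (simp add: F_def coverable_iff_pierceable)
  moreover have "\<forall>i<h. \<forall>C \<in> F i. is_box C"
    using assms(2) is_box_covering_translations unfolding F_def by blast
  ultimately obtain f where f: "\<forall>i<h. f i \<in> F i" and not_pierced: "\<not> pierceable n (f ` {..<h})"
    using spec[OF assms(1)[unfolded hc_prop_def], of F] by blast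
  have "\<forall>i. \<exists>y. i < h \<longrightarrow> y \<in> E i \<and> f i = covering_translations B y"
    using f unfolding F_def by blast
  then obtain x where x: "\<forall>i. i < h \<longrightarrow> x i \<in> E i \<and> f i = covering_translations B (x i)"
    by (rule choice[THEN exE])
  then have "f ` {..<h} = covering_translations B ` x ` {..<h}"
    by (auto simp: image_image)
  with x not_pierced show "\<exists>x. (\<forall>i<h. x i \<in> E i) \<and> \<not> coverable n B (x ` {..<h})"
    by (auto simp: coverable_iff_pierceable)
qed

lemma colorful_helly_small_witness:
  assumes "colorful_helly h P" and "\<not> P X"
  shows "\<exists>Y\<subseteq>X. finite Y \<and> card Y \<le> h \<and> \<not> P Y"
proof -
  obtain x where "\<forall>i<h. x i \<in> X" and "\<not> P (x ` {..<h})"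
    using assms unfolding colorful_helly_def by (elim allE[of _ "\<lambda>_. X"]) auto
  then show ?thesis
    by (metis card_image_le card_lessThan finite_imageI finite_lessThan image_subsetI lessThan_iff)
qed

lemma colorful_helly_witness_outside:
  assumes helly: "colorful_helly h P" and S: "finite S"
    and far: "\<forall>X\<subseteq>S. P X \<longrightarrow> real (card X) \<le> (1 - \<epsilon>) * real (card S)"
    and U: "U \<subseteq> S" "real (card U) < \<epsilon> * real (card S)"
  shows "\<exists>Y\<subseteq>S - U. card Y \<le> h \<and> \<not> P Y"
proof -
  have "(1 - \<epsilon>) * real (card S) < real (card (S - U))"
    using S U card_mono[OF S U(1)]
    by (simp add: card_Diff_subset finite_subset of_nat_diff algebra_simps)
  then have "\<not> P (S - U)"
    using far by (meson Diff_subset not_le)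
  then show ?thesis
    using colorful_helly_small_witness[OF helly] by blast
qed

lemma colorful_helly_disjoint_witnesses:
  assumes helly: "colorful_helly h P" and S: "finite S"
    and far: "\<forall>X\<subseteq>S. P X \<longrightarrow> real (card X) \<le> (1 - \<epsilon>) * real (card S)"
  shows "\<forall>j<r. real (j * h) < \<epsilon> * real (card S) \<Longrightarrow>
    \<exists>D. (\<forall>i<r. D i \<subseteq> S \<and> card (D i) \<le> h \<and> \<not> P (D i)) \<and> disjoint_family_on D {..<r}"
proof (induction r)
  case 0
  then show ?case by (simp add: disjoint_family_on_def)
next
  case (Suc r)
  then obtain D where D: "\<forall>i<r. D i \<subseteq> S \<and> card (D i) \<le> h \<and> \<not> P (D i)"
    and disj: "disjoint_family_on D {..<r}"
    by auto
  define U where "U = (\<Union>i<r. D i)"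
  have "card U \<le> (\<Sum>i<r. card (D i))"
    unfolding U_def by (rule card_UN_le) simp
  also have "\<dots> \<le> r * h"
    using D sum_mono[of "{..<r}" "\<lambda>i. card (D i)" "\<lambda>_. h"] by simp
  finally have "real (card U) \<le> real (r * h)"
    by (simp only: of_nat_le_iff)
  also have "\<dots> < \<epsilon> * real (card S)"
    using Suc.prems by simp
  finally have "real (card U) < \<epsilon> * real (card S)" .
  moreover have "U \<subseteq> S"
    using D unfolding U_def by auto
  ultimately obtain Y where Y: "Y \<subseteq> S - U" "card Y \<le> h" "\<not> P Y"
    using colorful_helly_witness_outside[OF helly S far] by blast
  have "\<forall>i<Suc r. (D(r := Y)) i \<subseteq> S \<and> card ((D(r := Y)) i) \<le> h \<and> \<not> P ((D(r := Y)) i)"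
    using D Y by (auto simp: less_Suc_eq)
  moreover have "disjoint_family_on (D(r := Y)) {..<Suc r}"
  proof -
    have "disjoint_family_on (D(r := Y)) {..<r}"
      using disj by (rule disjoint_family_on_bisimulation) auto
    moreover have "(D(r := Y)) r \<inter> (\<Union>i<r. (D(r := Y)) i) = {}"
      using Y(1) unfolding U_def by auto
    ultimately show ?thesis
      by (simp add: lessThan_Suc disjoint_family_on_insert)
  qed
  ultimately show ?case
    by (rule exI[of _ "D(r := Y)", OF conjI])
qed

lemma colorful_helly_transversal_meeting_exactly:
  fixes r :: nat
  assumes helly: "colorful_helly h P"
    and D: "\<forall>j<r. \<not> P (D j)" "disjoint_family_on D {..<r}"
    and J: "J \<subseteq> {..<r}" "card J = h"
  shows "\<exists>X. X \<subseteq> (\<Union>j<r. D j) \<and> card X = h \<and> \<not> P X \<and> {j. j < r \<and> X \<inter> D j \<noteq> {}} = J"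
proof -
  have "finite J"
    using J(1) by (rule finite_subset) simp
  then obtain \<sigma> where "bij_betw \<sigma> {0..<card J} J"
    using ex_bij_betw_nat_finite by blast
  with J(2) have \<sigma>: "bij_betw \<sigma> {..<h} J"
    by (simp add: atLeast0LessThan)
  then have \<sigma>_range: "\<sigma> i \<in> J" "\<sigma> i < r" if "i < h" for i
    using bij_betwE J(1) that by blast+
  obtain x where x: "\<forall>i<h. x i \<in> D (\<sigma> i)" and bad: "\<not> P (x ` {..<h})"
    using helly D(1) \<sigma>_range unfolding colorful_helly_def
    by (elim allE[of _ "\<lambda>i. D (\<sigma> i)"]) auto
  have meets: "x i \<in> D j \<longleftrightarrow> j = \<sigma> i" if "i < h" "j < r" for i j
    using D(2) x \<sigma>_range that unfolding disjoint_family_on_def by blast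
  have "inj_on x {..<h}"
    using meets \<sigma>_range \<sigma> unfolding bij_betw_def inj_on_def by (metis lessThan_iff)
  then have "card (x ` {..<h}) = h"
    by (simp add: card_image)
  moreover have "{j. j < r \<and> x ` {..<h} \<inter> D j \<noteq> {}} = J"
    using meets \<sigma>_range J(1) bij_betw_imp_surj_on[OF \<sigma>] by fastforce
  moreover have "x ` {..<h} \<subseteq> (\<Union>j<r. D j)"
    using x \<sigma>_range by blast
  ultimately show ?thesis
    using bad by blast
qed

lemma colorful_helly_card_bad_subsets:
  assumes helly: "colorful_helly h P" and S: "finite S"
    and D: "\<forall>j<r. D j \<subseteq> S \<and> \<not> P (D j)" "disjoint_family_on D {..<r}"
  shows "r choose h \<le> card {A. A \<subseteq> S \<and> card A = h \<and> \<not> P A}"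
proof -
  let ?meets = "\<lambda>X. {j. j < r \<and> X \<inter> D j \<noteq> {}}"
  have "{J. J \<subseteq> {..<r} \<and> card J = h} \<subseteq> ?meets ` {A. A \<subseteq> S \<and> card A = h \<and> \<not> P A}"
  proof
    fix J assume "J \<in> {J. J \<subseteq> {..<r} \<and> card J = h}"
    then obtain X where "X \<subseteq> (\<Union>j<r. D j)" "card X = h" "\<not> P X" "?meets X = J"
      using colorful_helly_transversal_meeting_exactly[OF helly] D by blast
    moreover from \<open>X \<subseteq> (\<Union>j<r. D j)\<close> D(1) have "X \<subseteq> S"
      by blast
    ultimately show "J \<in> ?meets ` {A. A \<subseteq> S \<and> card A = h \<and> \<not> P A}"
      by blast
  qed
  moreover have "finite {A. A \<subseteq> S \<and> card A = h \<and> \<not> P A}"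
    using S by simp
  ultimately have "card {J. J \<subseteq> {..<r} \<and> card J = h} \<le> card {A. A \<subseteq> S \<and> card A = h \<and> \<not> P A}"
    by (intro surj_card_le)
  then show ?thesis
    by (simp add: n_subsets)
qed

lemma colorful_helly_exists_bad_subset:
  assumes helly: "colorful_helly h P" and mono: "\<And>X Y. P Y \<Longrightarrow> X \<subseteq> Y \<Longrightarrow> P X"
    and S: "finite S" "h \<le> card S" "\<not> P S"
  shows "{A. A \<subseteq> S \<and> card A = h \<and> \<not> P A} \<noteq> {}"
proof -
  obtain Y where "Y \<subseteq> S" "card Y \<le> h" "\<not> P Y"
    using colorful_helly_small_witness[OF helly \<open>\<not> P S\<close>] by blast
  obtain Z where "Y \<subseteq> Z" "Z \<subseteq> S" "card Z = h"
    using exists_subset_between[OF \<open>card Y \<le> h\<close> S(2) \<open>Y \<subseteq> S\<close> S(1)] by blast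
  have "\<not> P Z"
    using mono[OF _ \<open>Y \<subseteq> Z\<close>] \<open>\<not> P Y\<close> by blast
  with \<open>Z \<subseteq> S\<close> \<open>card Z = h\<close> show ?thesis
    by blast
qed

lemma colorful_helly_card_bad_subsets_ge:
  assumes helly: "colorful_helly h P" and S: "finite S"
    and far: "\<forall>X\<subseteq>S. P X \<longrightarrow> real (card X) \<le> (1 - \<epsilon>) * real (card S)"
    and h: "0 < h" and large: "real h ^ 2 \<le> \<epsilon> * real (card S)"
  shows "(\<epsilon> * real (card S) / real h ^ 2) ^ h \<le> real (card {A. A \<subseteq> S \<and> card A = h \<and> \<not> P A})"
proof -
  define r where "r = nat \<lceil>\<epsilon> * real (card S) / real h\<rceil>"
  have "real (j * h) < \<epsilon> * real (card S)" if "j < r" for j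
  proof -
    have "real j < \<epsilon> * real (card S) / real h"
      using that unfolding r_def by (simp add: zless_nat_eq_int_zless less_ceiling_iff)
    then show ?thesis
      using h by (simp add: field_simps)
  qed
  then obtain D where "\<forall>i<r. D i \<subseteq> S \<and> card (D i) \<le> h \<and> \<not> P (D i)"
    and "disjoint_family_on D {..<r}"
    using colorful_helly_disjoint_witnesses[OF helly S far, of r] by blast
  then have card_bad: "r choose h \<le> card {A. A \<subseteq> S \<and> card A = h \<and> \<not> P A}"
    using colorful_helly_card_bad_subsets[OF helly S] by blast
  have r_ge: "\<epsilon> * real (card S) / real h \<le> real r"
    unfolding r_def by (rule real_nat_ceiling_ge)
  have "real h \<le> \<epsilon> * real (card S) / real h"
    using large h by (simp add: field_simps power2_eq_square)
  then have "h \<le> r"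
    using r_ge by linarith
  have "\<epsilon> * real (card S) / real h ^ 2 \<le> real r / real h"
    using divide_right_mono[OF r_ge, of "real h"] by (simp add: power2_eq_square)
  moreover have "0 \<le> \<epsilon> * real (card S)"
    using large by (metis order_trans zero_le_power2)
  ultimately have "(\<epsilon> * real (card S) / real h ^ 2) ^ h \<le> (real r / real h) ^ h"
    by (intro power_mono) simp_all
  also have "\<dots> \<le> real (r choose h)"
    using binomial_ge_n_over_k_pow_k[OF \<open>h \<le> r\<close>] by simp
  also have "\<dots> \<le> real (card {A. A \<subseteq> S \<and> card A = h \<and> \<not> P A})"
    using card_bad by simp
  finally show ?thesis .
qed

lemma colorful_helly_bad_subsets_ratio:
  assumes helly: "colorful_helly h P" and S: "finite S" "h \<le> card S"
    and far: "\<forall>X\<subseteq>S. P X \<longrightarrow> real (card X) \<le> (1 - \<epsilon>) * real (card S)"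
    and h: "0 < h" and large: "real h ^ 2 \<le> \<epsilon> * real (card S)"
  shows "(\<epsilon> / real h ^ 2) ^ h
    \<le> real (card {A. A \<subseteq> S \<and> card A = h \<and> \<not> P A}) / real (card S choose h)"
proof -
  have "0 < card S"
    using S(2) h by linarith
  then have "(\<epsilon> / real h ^ 2) ^ h = (\<epsilon> * real (card S) / real h ^ 2) ^ h / real (card S) ^ h"
    by (simp add: power_divide power_mult_distrib)
  also have "\<dots> \<le> real (card {A. A \<subseteq> S \<and> card A = h \<and> \<not> P A}) / real (card S choose h)"
  proof (rule frac_le)
    show "real (card S choose h) \<le> real (card S) ^ h"
      using binomial_le_pow[OF S(2)] by (simp flip: of_nat_power)
  qed (use S(2) colorful_helly_card_bad_subsets_ge[OF helly S(1) far h large] in auto)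
  finally show ?thesis .
qed

lemma prob_subset_pmf:
  assumes "finite S" and "h \<le> card S"
  shows "measure_pmf.prob (subset_pmf h S) {A. Q A}
    = real (card {A. A \<subseteq> S \<and> card A = h \<and> Q A}) / real (card S choose h)"
proof -
  have "{A. A \<subseteq> S \<and> card A = h} \<noteq> {}"
    using obtain_subset_with_card_n[OF assms(2)] by blast
  moreover have "{A. A \<subseteq> S \<and> card A = h} \<inter> {A. Q A} = {A. A \<subseteq> S \<and> card A = h \<and> Q A}"
    by blast
  ultimately show ?thesis
    using assms(1) by (simp add: subset_pmf_def measure_pmf_of_set n_subsets)
qed

text \<open>The first term bounds the large case \<open>h\<^sup>2 \<le> \<epsilon>m\<close>; otherwise \<open>m < h\<^sup>2/\<epsilon>\<close> and a single
  uncoverable \<open>h\<close>-subset among at most \<open>2\<^sup>m\<close> already gives the second.\<close>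
definition sample_prob_bound :: "real \<Rightarrow> nat \<Rightarrow> real" where
  "sample_prob_bound \<epsilon> h = min ((\<epsilon> / real h ^ 2) ^ h) (1 / 2 ^ nat \<lceil>real h ^ 2 / \<epsilon>\<rceil>)"

lemma sample_prob_bound_pos: "0 < \<epsilon> \<Longrightarrow> 0 < h \<Longrightarrow> 0 < sample_prob_bound \<epsilon> h"
  unfolding sample_prob_bound_def by simp

lemma colorful_helly_prob_bad_sample:
  assumes helly: "colorful_helly h P" and mono: "\<And>X Y. P Y \<Longrightarrow> X \<subseteq> Y \<Longrightarrow> P X"
    and S: "finite S" "h \<le> card S"
    and far: "\<forall>X\<subseteq>S. P X \<longrightarrow> real (card X) \<le> (1 - \<epsilon>) * real (card S)"
    and h: "0 < h" and \<epsilon>: "0 < \<epsilon>"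
  shows "sample_prob_bound \<epsilon> h \<le> measure_pmf.prob (subset_pmf h S) {A. \<not> P A}"
proof (cases "real h ^ 2 \<le> \<epsilon> * real (card S)")
  case True
  then show ?thesis
    using colorful_helly_bad_subsets_ratio[OF helly S far h] prob_subset_pmf[OF S]
    by (simp add: sample_prob_bound_def min.coboundedI1)
next
  case False
  define M where "M = nat \<lceil>real h ^ 2 / \<epsilon>\<rceil>"
  have "real (card S) < real h ^ 2 / \<epsilon>"
    using False \<epsilon> by (simp add: field_simps)
  then have "real (card S) < real M"
    using real_nat_ceiling_ge[of "real h ^ 2 / \<epsilon>"] unfolding M_def by linarith
  then have "card S \<le> M"
    by simp
  then have "card S choose h \<le> 2 ^ M"
    using binomial_le_pow2[of "card S" h] power_increasing[of "card S" M "2::nat"] by linarith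
  have "\<not> P S"
  proof
    assume "P S"
    then have "real (card S) \<le> (1 - \<epsilon>) * real (card S)"
      using far by blast
    moreover have "0 < card S"
      using S(2) h by linarith
    ultimately show False
      using \<epsilon> by (simp add: algebra_simps mult_le_0_iff)
  qed
  then have "1 \<le> card {A. A \<subseteq> S \<and> card A = h \<and> \<not> P A}"
    using colorful_helly_exists_bad_subset[OF helly mono S] S(1) by (simp add: Suc_le_eq card_gt_0_iff)
  then have "1 / 2 ^ M
    \<le> real (card {A. A \<subseteq> S \<and> card A = h \<and> \<not> P A}) / real (card S choose h)"
    using S(2) \<open>card S choose h \<le> 2 ^ M\<close> by (intro frac_le) (simp_all flip: of_nat_power)
  then show ?thesis
    using prob_subset_pmf[OF S] by (simp add: sample_prob_bound_def M_def min.coboundedI2)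
qed

lemma prob_some_sample_satisfies:
  fixes p :: "'a pmf"
  assumes "\<gamma> \<le> measure_pmf.prob p {x. Q x}" and "0 < \<delta>" and "ln (1 / \<delta>) \<le> \<gamma> * real k"
  shows "1 - \<delta> \<le> measure_pmf.prob (Pi_pmf {..<k} dflt (\<lambda>_. p)) {g. \<exists>i<k. Q (g i)}"
proof -
  define q where "q = measure_pmf.prob p {x. \<not> Q x}"
  have "{x. \<not> Q x} = UNIV - {x. Q x}"
    by blast
  then have "q = 1 - measure_pmf.prob p {x. Q x}"
    unfolding q_def using measure_pmf.prob_compl[of "{x. Q x}" p] by simp
  then have "q \<le> exp (- \<gamma>)"
    using assms(1) exp_ge_add_one_self[of "- \<gamma>"] by linarith
  have "UNIV - {g. \<exists>i<k. Q (g i)} = Pi {..<k} (\<lambda>_. {x. \<not> Q x})"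
    by auto
  then have "measure_pmf.prob (Pi_pmf {..<k} dflt (\<lambda>_. p)) {g. \<exists>i<k. Q (g i)} = 1 - q ^ k"
    using measure_pmf.prob_compl[of "{g. \<exists>i<k. Q (g i)}" "Pi_pmf {..<k} dflt (\<lambda>_. p)"]
    by (simp add: measure_Pi_pmf_Pi q_def)
  moreover have "q ^ k \<le> \<delta>"
  proof -
    have "q ^ k \<le> exp (- \<gamma>) ^ k"
      using \<open>q \<le> exp (- \<gamma>)\<close> by (simp add: q_def power_mono)
    also have "\<dots> = exp (- (\<gamma> * real k))"
      by (simp flip: exp_of_nat_mult)
    also have "\<dots> \<le> exp (- ln (1 / \<delta>))"
      using assms(3) by simp
    also have "\<dots> = \<delta>"
      using assms(2) by (simp add: ln_div)
    finally show ?thesis .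
  qed
  ultimately show ?thesis
    by simp
qed

lemma hc_pos_hc_prop:
  assumes "hc_finite d n"
  shows "0 < hc d n \<and> hc_prop d n (hc d n)"
  using assms unfolding hc_finite_def hc_def by (rule LeastI_ex)

lemma coverable_subset_card_le:
  fixes B S :: "(real ^ 'd) set"
  assumes S: "finite S"
    and far: "\<forall>T. finite T \<and> card T \<le> n \<longrightarrow>
      \<epsilon> * real (card S) \<le> real (card (S - (\<Union>t\<in>T. (\<lambda>x. t + x) ` B)))"
  shows "\<forall>X\<subseteq>S. coverable n B X \<longrightarrow> real (card X) \<le> (1 - \<epsilon>) * real (card S)"
proof (intro allI impI)
  fix X assume "X \<subseteq> S" and "coverable n B X"
  then obtain T where T: "finite T" "card T \<le> n" and X: "X \<subseteq> (\<Union>t\<in>T. (\<lambda>x. t + x) ` B)"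
    unfolding coverable_def by blast
  define W where "W = (\<Union>t\<in>T. (\<lambda>x. t + x) ` B)"
  have "card X \<le> card (S \<inter> W)"
    using S \<open>X \<subseteq> S\<close> X unfolding W_def by (intro card_mono) auto
  also have "\<dots> = card S - card (S - W)"
    using S by (metis Diff_Diff_Int Diff_subset card_Diff_subset finite_Diff)
  finally have "card X + card (S - W) \<le> card S"
    using card_mono[OF S, of "S - W"] by auto
  then have "real (card X) \<le> real (card S) - real (card (S - W))"
    by (simp only: of_nat_add [symmetric] of_nat_le_iff le_diff_eq)
  moreover have "\<epsilon> * real (card S) \<le> real (card (S - W))"
    using far T unfolding W_def by blast
  ultimately show "real (card X) \<le> (1 - \<epsilon>) * real (card S)"
    by (simp add: algebra_simps)
qed

lemma sampling_finds_uncoverable: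
  fixes B S :: "(real ^ 'd::finite) set"
  assumes hc: "hc_finite TYPE('d) n" and \<epsilon>: "0 < \<epsilon>"
    and B: "is_box B" and S: "finite S" "hc TYPE('d) n \<le> card S"
    and far: "\<forall>T. finite T \<and> card T \<le> n \<longrightarrow>
      \<epsilon> * real (card S) \<le> real (card (S - (\<Union>t\<in>T. (\<lambda>x. t + x) ` B)))"
    and \<delta>: "0 < \<delta>" and k: "ln (1 / \<delta>) \<le> sample_prob_bound \<epsilon> (hc TYPE('d) n) * real k"
  shows "1 - \<delta> \<le> measure_pmf.prob (Pi_pmf {..<k} {} (\<lambda>_. subset_pmf (hc TYPE('d) n) S))
    {g. \<exists>i<k. \<not> coverable n B (g i)}"
proof (rule prob_some_sample_satisfies[OF _ \<delta> k])
  have "0 < hc TYPE('d) n" and "colorful_helly (hc TYPE('d) n) (coverable n B)"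
    using hc_pos_hc_prop[OF hc] hc_prop_imp_colorful_helly[OF _ B] by auto
  then show "sample_prob_bound \<epsilon> (hc TYPE('d) n)
    \<le> measure_pmf.prob (subset_pmf (hc TYPE('d) n) S) {A. \<not> coverable n B A}"
    using coverable_subset_card_le[OF S(1) far] S \<epsilon>
    by (intro colorful_helly_prob_bad_sample) (auto intro: coverable_subset)
qed

lemma le_mult_nat_ceiling_divide: "0 < c \<Longrightarrow> x \<le> c * real (nat \<lceil>x / c\<rceil>)"
  using real_nat_ceiling_ge[of "x / c"] by (simp add: field_simps)

theorem theorem12:
  fixes n :: nat
  assumes "hc_finite TYPE('d::finite) n"
  shows "\<forall>\<epsilon>::real. 0 < \<epsilon> \<and> \<epsilon> \<le> 1 \<longrightarrow>
    (\<exists>\<gamma>::real. \<gamma> > 0 \<and>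
      (\<forall>(B :: (real ^ 'd) set) (S :: (real ^ 'd) set) (\<delta>::real).
         is_box B \<longrightarrow> finite S \<longrightarrow> card S \<ge> hc TYPE('d) n \<longrightarrow>
         (\<forall>T. finite T \<and> card T \<le> n \<longrightarrow>
              real (card (S - (\<Union>t\<in>T. (\<lambda>x. t + x) ` B))) \<ge> \<epsilon> * real (card S)) \<longrightarrow>
         0 < \<delta> \<longrightarrow> \<delta> \<le> 1 \<longrightarrow>
         (let k = nat \<lceil>(1 / \<gamma>) * ln (1 / \<delta>)\<rceil> in
            measure_pmf.prob (Pi_pmf {..<k} {} (\<lambda>_. subset_pmf (hc TYPE('d) n) S))
              {g. \<exists>i<k. \<not> coverable n B (g i)} \<ge> 1 - \<delta>)))"
  apply (intro allI impI)
  subgoal for \<epsilon>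
    apply (rule exI[of _ "sample_prob_bound \<epsilon> (hc TYPE('d) n)"])
    using hc_pos_hc_prop[OF assms]
    by (auto simp: Let_def sample_prob_bound_pos
        intro!: sampling_finds_uncoverable[OF assms] le_mult_nat_ceiling_divide)
  done

end
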